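(* Let $G$ be a strongly connected digraph. The set-valued map $f_{\mathrm{imcor}}$ is closed on $\operatorname{Adj}(G)$: for every $D\in\operatorname{Adj}(G)$ and all sequences $(D_k)$, $(C_k)$ in $\operatorname{Adj}(G)$ with $D_k\to D$, $C_k\to C$ and $C_k\in f_{\mathrm{imcor}}(D_k)$ for all $k$, we have $C\in f_{\mathrm{imcor}}(D)$.
   Context: A digraph $G=(V,E)$, $V=\{v_1,\dots,v_n\}$, $E\subseteq V\times V$; strongly connected means a directed path exists between every ordered pair of distinct vertices. $\operatorname{Adj}(G)$ is the set of $A=(a_{ij})\in\mathbb{R}^{n\times n}_{\geq0}$ with $a_{ij}>0$ iff $(v_i,v_j)\in E$. Imbalance: $\omega(v_i)=\sum_j a_{ji}-\sum_j a_{ij}$. For $A\in\operatorname{Adj}(G)$, $a_i^*=\min\{a_{ik}:k\neq i,\ a_{ik}\neq0\}$ and $J_i^*=\{j\neq i: a_{ij}=a_i^*\}$. $f_{\mathrm{imcor}}(A)$ is the set of $B\in\operatorname{Adj}(G)$ such that for each $i$ there is $j_i^*\in J_i^*$ with $b_{ij}=a_{ij}+\omega(v_i)$ if $\omega(v_i)>0$ and $j=j_i^*$, and $b_{ij}=a_{ij}$ otherwise (imbalances computed w.r.t. $A$). *)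

theory Defs
  imports "HOL-Analysis.Analysis"
begin

text \<open>Vertices are the elements of a finite type 'n; a digraph is its edge set
  E :: ('n \<times> 'n) set; weighted adjacency matrices are elements of real^'n^'n
  (entry A$i$j is the weight of the edge from i to j).\<close>

definition strongly_connected :: "('n \<times> 'n) set \<Rightarrow> bool" where
  "strongly_connected E \<longleftrightarrow> (\<forall>u v. u \<noteq> v \<longrightarrow> (u, v) \<in> E\<^sup>+)"

definition Adj :: "('n::finite \<times> 'n) set \<Rightarrow> (real^'n^'n) set" where
  "Adj E = {A. (\<forall>i j. A$i$j \<ge> 0) \<and> (\<forall>i j. A$i$j > 0 \<longleftrightarrow> (i, j) \<in> E)}"

definition imbalance :: "real^'n^'n \<Rightarrow> 'n::finite \<Rightarrow> real" where
  "imbalance A i = (\<Sum>j\<in>UNIV. A$j$i) - (\<Sum>j\<in>UNIV. A$i$j)"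

definition astar :: "real^'n^'n \<Rightarrow> 'n::finite \<Rightarrow> real" where
  "astar A i = Min {A$i$k | k. k \<noteq> i \<and> A$i$k \<noteq> 0}"

definition Jstar :: "real^'n^'n \<Rightarrow> 'n::finite \<Rightarrow> 'n set" where
  "Jstar A i = {j. j \<noteq> i \<and> A$i$j = astar A i}"

definition f_imcor :: "('n::finite \<times> 'n) set \<Rightarrow> real^'n^'n \<Rightarrow> (real^'n^'n) set" where
  "f_imcor E A = {B \<in> Adj E. \<forall>i. \<exists>js \<in> Jstar A i. \<forall>j.
      B$i$j = (if imbalance A i > 0 \<and> j = js then A$i$j + imbalance A i else A$i$j)}"

end

theory Submission
  imports Defs
begin

text \<open>By the pigeonhole principle some column js is the target of the correction
  Cs k \<in> f_imcor E (Ds k) for infinitely many k. Minimality of an off-diagonal entry among the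
  positive ones is preserved in the limit, because D has the same support as the Ds k; and for a
  fixed target column the corrected row depends continuously on the matrix. Both properties
  therefore pass to C along that subsequence. Strong connectivity only ensures that every row
  has a positive off-diagonal entry, so that the minimum defining astar is over a nonempty set.\<close>

lemma tendsto_closed_frequently:
  assumes "closed S" "(f \<longlongrightarrow> l) F" "\<exists>\<^sub>F x in F. f x \<in> S"
  shows "l \<in> S"
proof (rule ccontr)
  assume "l \<notin> S"
  then have "\<forall>\<^sub>F x in F. f x \<in> - S"
    using assms(1,2) by (intro topological_tendstoD) auto
  with assms(3) show False
    by (simp add: frequently_def)
qed

lemma strongly_connected_out_edge:
  assumes "strongly_connected E" "j \<noteq> i"
  shows "\<exists>w. w \<noteq> i \<and> (i, w) \<in> E"
proof -
  have "(i, j) \<in> E\<^sup>+"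
    using assms unfolding strongly_connected_def by auto
  then show ?thesis
    using \<open>j \<noteq> i\<close>
  proof (induction rule: trancl_induct)
    case (step y z)
    then show ?case by (cases "y = i") auto
  qed auto
qed

lemma Adj_nonzero_iff:
  assumes "A \<in> Adj E"
  shows "A$i$j \<noteq> 0 \<longleftrightarrow> (i, j) \<in> E"
proof -
  have "A$i$j \<ge> 0" "A$i$j > 0 \<longleftrightarrow> (i, j) \<in> E"
    using assms unfolding Adj_def by auto
  then show ?thesis by linarith
qed

lemma astar_Adj:
  assumes "A \<in> Adj E"
  shows "astar A i = Min {A$i$k | k. k \<noteq> i \<and> (i, k) \<in> E}"
  unfolding astar_def using Adj_nonzero_iff[OF assms] by simp

lemma Jstar_iff:
  fixes A :: "real^'n^'n::finite"
  assumes A: "A \<in> Adj E" and w: "(i, w) \<in> E" "w \<noteq> i"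
  shows "j \<in> Jstar A i \<longleftrightarrow>
    j \<noteq> i \<and> (i, j) \<in> E \<and> (\<forall>m. m \<noteq> i \<and> (i, m) \<in> E \<longrightarrow> A$i$j \<le> A$i$m)"
proof -
  define M where "M = {A$i$k | k. k \<noteq> i \<and> (i, k) \<in> E}"
  have "finite M"
    unfolding M_def by (rule finite_subset[of _ "range (\<lambda>k. A$i$k)"]) auto
  moreover have "M \<noteq> {}"
    unfolding M_def using w by auto
  ultimately have Min: "A$i$j = Min M \<longleftrightarrow> A$i$j \<in> M \<and> (\<forall>a\<in>M. A$i$j \<le> a)"
    by (rule eq_Min_iff)
  have mem: "A$i$j \<in> M \<longleftrightarrow> (i, j) \<in> E" if "j \<noteq> i"
  proof
    assume "A$i$j \<in> M"
    then obtain k where "A$i$j = A$i$k" "(i, k) \<in> E"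
      unfolding M_def by blast
    then show "(i, j) \<in> E"
      using Adj_nonzero_iff[OF A] by metis
  qed (use that M_def in blast)
  have "j \<in> Jstar A i \<longleftrightarrow> j \<noteq> i \<and> A$i$j \<in> M \<and> (\<forall>a\<in>M. A$i$j \<le> a)"
    unfolding Jstar_def astar_Adj[OF A] M_def[symmetric] using Min by auto
  moreover have "(\<forall>a\<in>M. A$i$j \<le> a) \<longleftrightarrow> (\<forall>m. m \<noteq> i \<and> (i, m) \<in> E \<longrightarrow> A$i$j \<le> A$i$m)"
    unfolding M_def by blast
  ultimately show ?thesis
    using mem by blast
qed

lemma Jstar_edge:
  assumes "strongly_connected E" "A \<in> Adj E" "j \<in> Jstar A i"
  shows "(i, j) \<in> E"
proof -
  have "j \<noteq> i"
    using assms(3) unfolding Jstar_def by simp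
  then obtain w where "w \<noteq> i" "(i, w) \<in> E"
    using strongly_connected_out_edge[OF assms(1)] by blast
  then show ?thesis
    using Jstar_iff[OF assms(2)] assms(3) by blast
qed

lemma Jstar_tendsto:
  assumes "strongly_connected E" "A \<in> Adj E" "\<And>k. As k \<in> Adj E" "As \<longlonglongrightarrow> A"
    and "\<exists>\<^sub>F k in sequentially. j \<in> Jstar (As k) i"
  shows "j \<in> Jstar A i"
proof -
  obtain k0 where j: "j \<in> Jstar (As k0) i"
    using frequently_ex[OF assms(5)] by blast
  then have "j \<noteq> i"
    unfolding Jstar_def by simp
  then obtain w where w: "w \<noteq> i" "(i, w) \<in> E"
    using strongly_connected_out_edge[OF assms(1)] by blast
  have "A$i$j \<le> A$i$m" if "m \<noteq> i" "(i, m) \<in> E" for m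
  proof -
    have "(\<lambda>k. As k $i$m - As k $i$j) \<longlonglongrightarrow> A$i$m - A$i$j"
      using assms(4) by (intro tendsto_intros)
    moreover have "\<exists>\<^sub>F k in sequentially. As k $i$m - As k $i$j \<in> {0..}"
      using assms(5) by (rule frequently_elim1) (use Jstar_iff[OF assms(3) w(2,1)] that in auto)
    ultimately have "A$i$m - A$i$j \<in> {0..}"
      by (rule tendsto_closed_frequently[OF closed_atLeast])
    then show ?thesis by simp
  qed
  then show ?thesis
    using Jstar_iff[OF assms(2) w(2,1)] Jstar_edge[OF assms(1,3) j] \<open>j \<noteq> i\<close> by blast
qed

lemma frequently_finite_choice:
  fixes P :: "'a \<Rightarrow> 'b::finite \<Rightarrow> bool"
  assumes "F \<noteq> bot" "\<forall>\<^sub>F x in F. \<exists>y. P x y"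
  shows "\<exists>y. \<exists>\<^sub>F x in F. P x y"
  using frequently_bex_finite[of UNIV P F] eventually_frequently[OF assms] by simp

text \<open>Adding the positive part of the imbalance, rather than distinguishing the sign of the
  imbalance as f_imcor does, makes the corrected row continuous in A.\<close>

definition corrected_row :: "real^'n^'n \<Rightarrow> 'n::finite \<Rightarrow> 'n \<Rightarrow> real^'n" where
  "corrected_row A i js = A$i + max 0 (imbalance A i) *\<^sub>R axis js 1"

lemma corrected_row_nth:
  "corrected_row A i js $ j = A$i$j + (if j = js then max 0 (imbalance A i) else 0)"
  unfolding corrected_row_def by (simp add: axis_def)

lemma f_imcor_iff:
  "B \<in> f_imcor E A \<longleftrightarrow> B \<in> Adj E \<and> (\<forall>i. \<exists>js \<in> Jstar A i. B$i = corrected_row A i js)"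
proof -
  have "(if imbalance A i > 0 \<and> j = js then A$i$j + imbalance A i else A$i$j)
      = corrected_row A i js $ j" for i js j
    by (simp add: corrected_row_nth)
  then show ?thesis
    unfolding f_imcor_def vec_eq_iff by simp
qed

lemma tendsto_corrected_row:
  assumes "As \<longlonglongrightarrow> A"
  shows "(\<lambda>k. corrected_row (As k) i js) \<longlonglongrightarrow> corrected_row A i js"
  unfolding corrected_row_def imbalance_def using assms by (intro tendsto_intros)

lemma corrected_rows_in_Adj:
  assumes A: "A \<in> Adj E" and rows: "\<And>i. \<exists>js. (i, js) \<in> E \<and> B$i = corrected_row A i js"
  shows "B \<in> Adj E"
proof -
  have "B$i$j \<ge> 0 \<and> (B$i$j > 0 \<longleftrightarrow> (i, j) \<in> E)" for i j
  proof -
    obtain js where js: "(i, js) \<in> E" "B$i = corrected_row A i js"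
      using rows by blast
    have "A$i$j \<ge> 0" "A$i$j > 0 \<longleftrightarrow> (i, j) \<in> E"
      using A unfolding Adj_def by auto
    then show ?thesis
      using js by (auto simp: corrected_row_nth)
  qed
  then show ?thesis
    unfolding Adj_def by blast
qed

theorem lemma4p1:
  fixes E :: "('n::finite \<times> 'n) set"
    and D C :: "real^'n^'n"
    and Ds Cs :: "nat \<Rightarrow> real^'n^'n"
  assumes "strongly_connected E"
    and "D \<in> Adj E"
    and "\<And>k. Ds k \<in> Adj E"
    and "\<And>k. Cs k \<in> Adj E"
    and "Ds \<longlonglongrightarrow> D"
    and "Cs \<longlonglongrightarrow> C"
    and "\<And>k. Cs k \<in> f_imcor E (Ds k)"
  shows "C \<in> f_imcor E D"
proof -
  have row: "\<exists>js \<in> Jstar D i. (i, js) \<in> E \<and> C$i = corrected_row D i js" for i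
  proof -
    have "\<forall>\<^sub>F k in sequentially. \<exists>js. js \<in> Jstar (Ds k) i \<and> Cs k $ i = corrected_row (Ds k) i js"
      using assms(7) unfolding f_imcor_iff by (intro always_eventually) blast
    from frequently_finite_choice[OF sequentially_bot this] obtain js where js:
      "\<exists>\<^sub>F k in sequentially. js \<in> Jstar (Ds k) i \<and> Cs k $ i = corrected_row (Ds k) i js"
      by blast
    have "js \<in> Jstar D i"
      using js by (intro Jstar_tendsto[OF assms(1-3,5)]) (auto elim: frequently_elim1)
    moreover have "C$i - corrected_row D i js \<in> {0}"
    proof (rule tendsto_closed_frequently[OF closed_singleton])
      show "(\<lambda>k. Cs k $ i - corrected_row (Ds k) i js) \<longlonglongrightarrow> C$i - corrected_row D i js"
        using assms(5,6) by (intro tendsto_intros tendsto_corrected_row)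
      show "\<exists>\<^sub>F k in sequentially. Cs k $ i - corrected_row (Ds k) i js \<in> {0}"
        using js by (auto elim: frequently_elim1)
    qed
    ultimately show ?thesis
      using Jstar_edge[OF assms(1,2)] by auto
  qed
  then have "C \<in> Adj E"
    by (intro corrected_rows_in_Adj[OF assms(2)]) blast
  with row show ?thesis
    unfolding f_imcor_iff by blast
qed

end
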